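(* Let $\mu$ be a $\mathbb C$-Carleson measure. Then $H_\mu$ is not strictly positive if and only if there exists a countable set $N\subseteq\mathbb R_+$ with $\sum_{\lambda\in N}\frac{\lambda}{(\lambda+1)^2}<\infty$ such that $\mu(\mathbb R_+\setminus N)=0$.
   Context: $\mathbb R_+=(0,\infty)$. $H^2(\mathbb C_+)$ is the Hardy space of holomorphic $f:\mathbb C_+\to\mathbb C$ with $\sup_{y>0}\int|f(x+iy)|^2dx<\infty$. A $\mathbb C$-Carleson measure is a positive measure $\mu$ on $\mathbb R_+$ such that $(f,g)\mapsto\int_{\mathbb R_+}\overline{f(i\lambda)}g(i\lambda)\,d\mu(\lambda)$ is a continuous sesquilinear form on $H^2(\mathbb C_+)$; $H_\mu$ is the bounded operator representing it. $H_\mu$ is strictly positive if $\langle f,H_\mu f\rangle>0$ for all $f\ne0$. *)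

theory Defs
  imports "HOL-Complex_Analysis.Complex_Analysis"
begin

definition upper_half :: "complex set" where
  "upper_half = {z. 0 < Im z}"

definition H2_sqnorm :: "(complex \<Rightarrow> complex) \<Rightarrow> ennreal" where
  "H2_sqnorm f = (SUP y\<in>{0<..}. \<integral>\<^sup>+ x. ennreal ((cmod (f (Complex x y)))\<^sup>2) \<partial>lborel)"

text \<open>Hardy space H2 of the upper half plane (values outside the half plane are irrelevant).\<close>
definition H2 :: "(complex \<Rightarrow> complex) set" where
  "H2 = {f. f holomorphic_on upper_half \<and> H2_sqnorm f < \<infinity>}"

definition H2_norm :: "(complex \<Rightarrow> complex) \<Rightarrow> real" where
  "H2_norm f = sqrt (enn2real (H2_sqnorm f))"

text \<open>An element of H2 is zero iff it vanishes on the upper half plane.\<close>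
definition H2_nonzero :: "(complex \<Rightarrow> complex) \<Rightarrow> bool" where
  "H2_nonzero f \<longleftrightarrow> (\<exists>z\<in>upper_half. f z \<noteq> 0)"

definition carleson_form :: "real measure \<Rightarrow> (complex \<Rightarrow> complex) \<Rightarrow> (complex \<Rightarrow> complex) \<Rightarrow> complex" where
  "carleson_form M f g = (\<integral> l. cnj (f (Complex 0 l)) * g (Complex 0 l) \<partial>M)"

definition measure_on_Rplus :: "real measure \<Rightarrow> bool" where
  "measure_on_Rplus M \<longleftrightarrow> sets M = sets (restrict_space borel {0<..})"

definition C_Carleson :: "real measure \<Rightarrow> bool" where
  "C_Carleson M \<longleftrightarrow> measure_on_Rplus M \<and>
     (\<forall>f\<in>H2. \<forall>g\<in>H2. integrable M (\<lambda>l. cnj (f (Complex 0 l)) * g (Complex 0 l))) \<and>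
     (\<exists>C. \<forall>f\<in>H2. \<forall>g\<in>H2. cmod (carleson_form M f g) \<le> C * H2_norm f * H2_norm g)"

text \<open>H_mu strictly positive: <f, H_mu f> = form(f,f) > 0 for all nonzero f in H2.
  Since H_mu is the operator representing the form, <f, H_mu f> is by definition form(f,f).\<close>
definition H_strictly_positive :: "real measure \<Rightarrow> bool" where
  "H_strictly_positive M \<longleftrightarrow>
     (\<forall>f\<in>H2. H2_nonzero f \<longrightarrow> (\<exists>r>0. carleson_form M f f = complex_of_real r))"

end

theory Submission
  imports Defs "HOL-Probability.Sinc_Integral"
begin

text \<open>For \<open>f \<in> H\<^sup>2\<close> the quadratic form is \<open>\<langle>f, H\<^sub>\<mu> f\<rangle> = \<integral> |f(\<i> \<lambda>)|\<^sup>2 d\<mu>\<close>, so \<open>H\<^sub>\<mu>\<close> fails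
  to be strictly positive iff some nonzero \<open>f \<in> H\<^sup>2\<close> vanishes \<open>\<mu>\<close>-almost everywhere on the
  imaginary axis.

  If \<open>\<mu>\<close> is carried by a countable \<open>N\<close> with \<open>\<Sum>\<^sub>\<lambda>\<^sub>\<in>\<^sub>N \<lambda> / (\<lambda> + 1)\<^sup>2 < \<infinity>\<close>, the Blaschke product \<open>B\<close> with
  zeros \<open>\<i> N\<close> converges to a bounded nonzero function and \<open>B(z) / (z + \<i>)\<close> is such an \<open>f\<close>.

  Conversely, the zeros \<open>\<i> \<lambda>\<close> of a nonzero \<open>f \<in> H\<^sup>2\<close> satisfy this Blaschke condition, so \<open>\<mu>\<close> is
  carried by the zero set. Dividing \<open>f\<close> by the finite Blaschke product of finitely many zeros
  does not increase its \<open>H\<^sup>2\<close> norm, whence \<open>|f(\<i> t)| \<Prod> (t + \<lambda>) / |t - \<lambda>|\<close> is bounded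
  independently of the zeros chosen, and taking logarithms bounds \<open>\<Sum> \<lambda> / (\<lambda> + 1)\<^sup>2\<close>. Boundary
  values are avoided: the zeros are reflected in a line \<open>Im z = \<delta>\<close> below them, which leaves \<open>|f|\<close>
  unchanged on that line, and Cauchy's formula is applied on large rectangles above it.\<close>

lemma open_upper_half: "open upper_half"
  unfolding upper_half_def using open_halfspace_Im_gt[of 0] by simp

lemma convex_upper_half: "convex upper_half"
  unfolding upper_half_def using convex_halfspace_Im_gt[of 0] by simp

lemma Complex_in_upper_half_iff [simp]: "Complex x y \<in> upper_half \<longleftrightarrow> 0 < y"
  by (simp add: upper_half_def)

lemma frac_plus_one_squared_le:
  fixes l :: real
  assumes "0 < l"
  shows "l / (l + 1)\<^sup>2 \<le> l" and "l / (l + 1)\<^sup>2 \<le> 1 / l"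
proof -
  have "1 \<le> (l + 1)\<^sup>2"
    using assms by (simp add: one_le_power)
  then show "l / (l + 1)\<^sup>2 \<le> l"
    using assms by (simp add: divide_le_eq mult_le_cancel_left1)
  have "l * l \<le> (l + 1)\<^sup>2"
    using assms power_mono[of l "l + 1" 2] by (simp add: power2_eq_square)
  then show "l / (l + 1)\<^sup>2 \<le> 1 / l"
    using assms by (simp add: field_simps)
qed

lemma nn_integral_inverse_1_plus_square:
  "(\<integral>\<^sup>+x. ennreal (inverse (1 + x\<^sup>2)) \<partial>lborel) = ennreal pi"
proof -
  have UNIV: "einterval (-\<infinity>) \<infinity> = (UNIV :: real set)"
    by (auto simp: einterval_def)
  have "integrable lborel (\<lambda>x::real. inverse (1 + x\<^sup>2))"
    using integrable_inverse_1_plus_square by (simp add: set_integrable_def UNIV)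
  moreover have "(\<integral>x. inverse (1 + x\<^sup>2) \<partial>lborel) = pi"
    using LBINT_inverse_1_plus_square by (simp add: interval_lebesgue_integral_def set_lebesgue_integral_def UNIV)
  ultimately show ?thesis
    by (subst nn_integral_eq_integral) (auto intro: add_pos_nonneg)
qed

lemma nn_integral_inverse_square_plus_square:
  assumes c: "0 < (c::real)"
  shows "(\<integral>\<^sup>+x. ennreal (1 / (x\<^sup>2 + c\<^sup>2)) \<partial>lborel) = ennreal (pi / c)"
proof -
  have "(\<integral>\<^sup>+x. ennreal (1 / (x\<^sup>2 + c\<^sup>2)) \<partial>lborel)
      = ennreal c * (\<integral>\<^sup>+u. ennreal (1 / ((0 + c * u)\<^sup>2 + c\<^sup>2)) \<partial>lborel)"
    using c by (subst nn_integral_real_affine[where c = c and t = 0]) auto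
  also have "\<dots> = ennreal c * (\<integral>\<^sup>+u. ennreal (1 / c\<^sup>2) * ennreal (inverse (1 + u\<^sup>2)) \<partial>lborel)"
    using c by (intro arg_cong2[where f = "(*)"] nn_integral_cong refl)
      (simp add: ennreal_mult'[symmetric] power_mult_distrib field_simps add_pos_nonneg)
  also have "\<dots> = ennreal c * (ennreal (1 / c\<^sup>2) * ennreal pi)"
    by (simp add: nn_integral_cmult nn_integral_inverse_1_plus_square)
  also have "\<dots> = ennreal (pi / c)"
    using c by (simp add: ennreal_mult'[symmetric] power2_eq_square)
  finally show ?thesis .
qed

section \<open>Blaschke products\<close>

text \<open>The sign is chosen so that the factor tends to \<open>1\<close> both as \<open>l \<rightarrow> 0\<close> and as \<open>l \<rightarrow> \<infinity>\<close>;
  this makes \<open>\<Sum> l / (l + 1)\<^sup>2 < \<infinity>\<close> the convergence condition of the product.\<close>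
definition blaschke_factor :: "real \<Rightarrow> complex \<Rightarrow> complex" where
  "blaschke_factor l z =
     (if l \<le> 1 then (z - \<i> * of_real l) / (z + \<i> * of_real l)
      else (\<i> * of_real l - z) / (z + \<i> * of_real l))"

lemma norm_plus_imaginary_ge:
  assumes "0 < l" "0 < Im z"
  shows "Im z + l \<le> cmod (z + \<i> * of_real l)"
  using abs_Im_le_cmod[of "z + \<i> * of_real l"] assms by simp

lemma holomorphic_blaschke_factor:
  assumes "0 < l"
  shows "blaschke_factor l holomorphic_on upper_half"
proof -
  have "z + \<i> * of_real l \<noteq> 0" if "z \<in> upper_half" for z
    using norm_plus_imaginary_ge[OF assms, of z] assms that by (auto simp: upper_half_def)
  then show ?thesis
    unfolding blaschke_factor_def by (cases "l \<le> 1") (auto intro!: holomorphic_intros)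
qed

lemma blaschke_factor_imaginary_zero [simp]: "blaschke_factor l (Complex 0 l) = 0"
proof -
  have "Complex 0 l = \<i> * of_real l"
    by (simp add: complex_eq_iff)
  then show ?thesis
    by (simp add: blaschke_factor_def)
qed

lemma blaschke_factor_nonzero:
  assumes "Re z \<noteq> 0"
  shows "blaschke_factor l z \<noteq> 0"
proof -
  have "z - \<i> * of_real l \<noteq> 0" "z + \<i> * of_real l \<noteq> 0"
    using assms by (auto simp: complex_eq_iff)
  then show ?thesis
    by (auto simp: blaschke_factor_def)
qed

lemma norm_blaschke_factor_le_1:
  assumes l: "0 < l" and z: "0 < Im z"
  shows "cmod (blaschke_factor l z) \<le> 1"
proof -
  have "(Im z - l)\<^sup>2 \<le> (Im z + l)\<^sup>2"
    using l z by (simp add: power2_eq_square algebra_simps)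
  then have "(cmod (z - \<i> * of_real l))\<^sup>2 \<le> (cmod (z + \<i> * of_real l))\<^sup>2"
    by (simp add: cmod_power2)
  then have "cmod (z - \<i> * of_real l) \<le> cmod (z + \<i> * of_real l)"
    by (simp add: power2_le_iff_abs_le)
  moreover have "0 < cmod (z + \<i> * of_real l)"
    using norm_plus_imaginary_ge[OF l z] l z by linarith
  ultimately show ?thesis
    by (simp add: blaschke_factor_def norm_divide norm_minus_commute)
qed

lemma norm_blaschke_factor_minus_1_le:
  assumes l: "0 < l" and a: "0 < a" "a \<le> Im z" and R: "cmod z \<le> R"
  shows "cmod (blaschke_factor l z - 1) \<le> 8 * (1 / a + R) * (l / (l + 1)\<^sup>2)"
proof -
  have den: "Im z + l \<le> cmod (z + \<i> * of_real l)"
    using norm_plus_imaginary_ge[OF l] a by simp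
  have nz: "z + \<i> * of_real l \<noteq> 0"
    using den a l by auto
  have R0: "0 \<le> R" using R norm_ge_zero order_trans by blast
  show ?thesis
  proof (cases "l \<le> 1")
    case True
    have "cmod (blaschke_factor l z - 1) = 2 * l / cmod (z + \<i> * of_real l)"
      using True nz l by (simp add: blaschke_factor_def field_simps norm_divide norm_mult)
    also have "\<dots> \<le> 2 * l / a"
      using den l a by (intro divide_left_mono) (auto intro!: mult_pos_pos)
    also have "\<dots> \<le> 8 / a * (l / (l + 1)\<^sup>2)"
    proof -
      have "(l + 1)\<^sup>2 \<le> 4"
        using True l power_mono[of "l + 1" 2 2] by simp
      then show ?thesis
        using l a by (simp add: field_simps)
    qed
    also have "\<dots> \<le> 8 * (1 / a + R) * (l / (l + 1)\<^sup>2)"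
      using l a R0 by (intro mult_right_mono) (auto simp: field_simps)
    finally show ?thesis .
  next
    case False
    have "cmod (blaschke_factor l z - 1) = 2 * cmod z / cmod (z + \<i> * of_real l)"
      using False nz by (simp add: blaschke_factor_def field_simps norm_divide norm_mult)
    also have "\<dots> \<le> 2 * R / l"
      using den l a R R0 by (intro frac_le) auto
    also have "\<dots> \<le> 8 * R * (l / (l + 1)\<^sup>2)"
    proof -
      have "(l + 1)\<^sup>2 \<le> 4 * l\<^sup>2"
        using False power_mono[of "l + 1" "2 * l" 2] by (simp add: power_mult_distrib)
      then have "2 * R * (l + 1)\<^sup>2 \<le> 8 * R * l\<^sup>2"
        using R0 mult_left_mono[of "(l + 1)\<^sup>2" "4 * l\<^sup>2" "2 * R"] by simp
      moreover have "0 < (l + 1)\<^sup>2"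
        using l by simp
      ultimately show ?thesis
        using l by (simp add: field_simps power2_eq_square)
    qed
    also have "\<dots> \<le> 8 * (1 / a + R) * (l / (l + 1)\<^sup>2)"
      using l a by (intro mult_right_mono mult_left_mono) auto
    finally show ?thesis .
  qed
qed

definition blaschke_product :: "(nat \<Rightarrow> real) \<Rightarrow> complex \<Rightarrow> complex" where
  "blaschke_product g z = (\<Prod>n. blaschke_factor (g n) z)"

lemma cball_half_Im_bounds:
  assumes "z \<in> cball z0 (Im z0 / 2)"
  shows "Im z0 / 2 \<le> Im z" "cmod z \<le> cmod z0 + Im z0 / 2"
proof -
  have d: "cmod (z0 - z) \<le> Im z0 / 2"
    using assms by (simp add: dist_norm)
  show "Im z0 / 2 \<le> Im z"
    using abs_Im_le_cmod[of "z0 - z"] d by simp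
  show "cmod z \<le> cmod z0 + Im z0 / 2"
    using norm_triangle_sub[of z z0] d by (simp add: norm_minus_commute)
qed

lemma cball_half_Im_subset_upper_half:
  "z0 \<in> upper_half \<Longrightarrow> cball z0 (Im z0 / 2) \<subseteq> upper_half"
  using cball_half_Im_bounds(1) by (fastforce simp: upper_half_def)

context
  fixes g :: "nat \<Rightarrow> real"
  assumes g_pos: "\<And>n. 0 < g n"
    and g_summable: "summable (\<lambda>n. g n / (g n + 1)\<^sup>2)"
begin

lemma uniformly_convergent_blaschke_partial_products:
  assumes z0: "z0 \<in> upper_half"
  shows "uniformly_convergent_on (cball z0 (Im z0 / 2)) (\<lambda>N z. \<Prod>n<N. blaschke_factor (g n) z)"
proof (rule uniformly_convergent_on_prod')
  let ?K = "cball z0 (Im z0 / 2)"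
  let ?C = "8 * (1 / (Im z0 / 2) + (cmod z0 + Im z0 / 2))"
  show "uniformly_convergent_on ?K (\<lambda>N z. \<Sum>n<N. cmod (blaschke_factor (g n) z - 1))"
  proof (rule Weierstrass_m_test'[where M = "\<lambda>n. ?C * (g n / (g n + 1)\<^sup>2)"])
    fix n z assume "z \<in> ?K"
    then have "cmod (blaschke_factor (g n) z - 1) \<le> ?C * (g n / (g n + 1)\<^sup>2)"
      using z0 cball_half_Im_bounds[of z z0]
      by (intro norm_blaschke_factor_minus_1_le g_pos) (auto simp: upper_half_def)
    then show "norm (cmod (blaschke_factor (g n) z - 1)) \<le> ?C * (g n / (g n + 1)\<^sup>2)"
      by simp
  qed (rule summable_mult[OF g_summable])
  show "continuous_on ?K (blaschke_factor (g n))" for n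
    using holomorphic_blaschke_factor[OF g_pos] cball_half_Im_subset_upper_half[OF z0]
    by (meson holomorphic_on_imp_continuous_on holomorphic_on_subset)
qed (rule compact_cball)

lemma convergent_prod_blaschke_factor:
  assumes z: "z \<in> upper_half"
  shows "convergent_prod (\<lambda>n. blaschke_factor (g n) z)"
proof (intro abs_convergent_prod_imp_convergent_prod summable_imp_abs_convergent_prod)
  let ?C = "8 * (1 / Im z + cmod z)"
  have "cmod (blaschke_factor (g n) z - 1) \<le> ?C * (g n / (g n + 1)\<^sup>2)" for n
    using z by (intro norm_blaschke_factor_minus_1_le g_pos) (auto simp: upper_half_def)
  then show "summable (\<lambda>n. cmod (blaschke_factor (g n) z - 1))"
    by (intro summable_comparison_test'[OF summable_mult[OF g_summable, of ?C]]) auto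
qed

lemma uniform_limit_blaschke_product:
  assumes z0: "z0 \<in> upper_half"
  shows "uniform_limit (cball z0 (Im z0 / 2)) (\<lambda>N z. \<Prod>n<N. blaschke_factor (g n) z)
           (blaschke_product g) sequentially"
proof -
  let ?K = "cball z0 (Im z0 / 2)"
  obtain P where P: "uniform_limit ?K (\<lambda>N z. \<Prod>n<N. blaschke_factor (g n) z) P sequentially"
    using uniformly_convergent_blaschke_partial_products[OF z0]
    by (auto simp: uniformly_convergent_on_def)
  also have "?this \<longleftrightarrow> ?thesis"
  proof (intro uniform_limit_cong)
    fix z assume z: "z \<in> ?K"
    have "(\<lambda>n. \<Prod>k<Suc n. blaschke_factor (g k) z) \<longlonglongrightarrow> P z"
      using LIMSEQ_Suc[OF tendsto_uniform_limitI[OF P z]] .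
    moreover have "(\<lambda>n. \<Prod>k<Suc n. blaschke_factor (g k) z) \<longlonglongrightarrow> blaschke_product g z"
      using convergent_prod_LIMSEQ[OF convergent_prod_blaschke_factor]
        cball_half_Im_subset_upper_half[OF z0] z
      by (auto simp: lessThan_Suc_atMost blaschke_product_def)
    ultimately show "P z = blaschke_product g z"
      by (rule LIMSEQ_unique)
  qed auto
  finally show ?thesis .
qed

lemma holomorphic_blaschke_product: "blaschke_product g holomorphic_on upper_half"
proof (rule holomorphic_uniform_sequence[OF open_upper_half])
  show "(\<lambda>z. \<Prod>n<N. blaschke_factor (g n) z) holomorphic_on upper_half" for N
    by (intro holomorphic_on_prod holomorphic_blaschke_factor g_pos)
  show "\<exists>d>0. cball z d \<subseteq> upper_half \<and>
          uniform_limit (cball z d) (\<lambda>N z. \<Prod>n<N. blaschke_factor (g n) z) (blaschke_product g) sequentially"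
    if "z \<in> upper_half" for z
    using that cball_half_Im_subset_upper_half uniform_limit_blaschke_product
    by (intro exI[of _ "Im z / 2"]) (auto simp: upper_half_def)
qed

lemma norm_blaschke_product_le_1:
  assumes z: "z \<in> upper_half"
  shows "cmod (blaschke_product g z) \<le> 1"
proof -
  have "cmod (\<Prod>k\<le>n. blaschke_factor (g k) z) \<le> 1" for n
    using z norm_blaschke_factor_le_1[OF g_pos]
    by (auto simp: prod_norm[symmetric] upper_half_def intro!: prod_le_1)
  then show ?thesis
    using LIMSEQ_le_const2[OF tendsto_norm[OF convergent_prod_LIMSEQ[OF convergent_prod_blaschke_factor[OF z]]]]
    unfolding blaschke_product_def by blast
qed

lemma blaschke_product_vanishes: "blaschke_product g (Complex 0 (g n)) = 0"
proof -
  have "(\<lambda>k. blaschke_factor (g k) (Complex 0 (g n))) has_prod blaschke_product g (Complex 0 (g n))"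
    unfolding blaschke_product_def using g_pos[of n]
    by (intro convergent_prod_has_prod convergent_prod_blaschke_factor) simp
  then show ?thesis
    by (rule has_prod_zeroI[where n = n]) simp
qed

lemma blaschke_product_nonzero:
  assumes "z \<in> upper_half" "Re z \<noteq> 0"
  shows "blaschke_product g z \<noteq> 0"
  using assms unfolding blaschke_product_def
  by (intro prodinf_nonzero convergent_prod_blaschke_factor blaschke_factor_nonzero)

end

lemma bounded_holomorphic_divide_in_H2:
  assumes hol: "P holomorphic_on upper_half"
    and bounded: "\<And>z. z \<in> upper_half \<Longrightarrow> cmod (P z) \<le> 1"
  shows "(\<lambda>z. P z / (z + \<i>)) \<in> H2"
proof -
  have "z + \<i> \<noteq> 0" if "z \<in> upper_half" for z
    using that by (auto simp: upper_half_def complex_eq_iff)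
  then have "(\<lambda>z. P z / (z + \<i>)) holomorphic_on upper_half"
    using hol by (intro holomorphic_intros) auto
  moreover have "H2_sqnorm (\<lambda>z. P z / (z + \<i>)) \<le> (\<integral>\<^sup>+x. ennreal (1 / (x\<^sup>2 + 1\<^sup>2)) \<partial>lborel)"
    unfolding H2_sqnorm_def
  proof (intro SUP_least nn_integral_mono ennreal_leI)
    fix x y :: real
    assume "y \<in> {0<..}"
    then have "x\<^sup>2 + 1 \<le> (cmod (Complex x y + \<i>))\<^sup>2"
      by (simp add: cmod_power2 one_le_power)
    moreover have "(cmod (P (Complex x y)))\<^sup>2 \<le> 1"
      using bounded[of "Complex x y"] \<open>y \<in> {0<..}\<close> by (simp add: power_le_one)
    moreover have "0 < x\<^sup>2 + 1"
      by (simp add: add_nonneg_pos)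
    ultimately show "(cmod (P (Complex x y) / (Complex x y + \<i>)))\<^sup>2 \<le> 1 / (x\<^sup>2 + 1\<^sup>2)"
      by (simp add: norm_divide power_divide frac_le)
  qed
  then have "H2_sqnorm (\<lambda>z. P z / (z + \<i>)) < \<infinity>"
    using nn_integral_inverse_square_plus_square[of 1] by (simp add: order_le_less_trans)
  ultimately show ?thesis
    by (simp add: H2_def)
qed

lemma summable_on_range_inverse_power_2:
  "(\<lambda>l::real. l / (l + 1)\<^sup>2) summable_on range (\<lambda>n. inverse (2 ^ n))"
proof -
  have "inj (\<lambda>n::nat. inverse (2 ^ n :: real))"
    by (rule injI) simp
  moreover have "summable (\<lambda>n::nat. inverse (2 ^ n :: real) / (inverse (2 ^ n) + 1)\<^sup>2)"
  proof (rule summable_comparison_test'[OF summable_geometric[of "1 / 2 :: real"]])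
    fix n :: nat
    have "inverse (2 ^ n :: real) / (inverse (2 ^ n) + 1)\<^sup>2 \<le> inverse (2 ^ n)"
      by (rule frac_plus_one_squared_le) simp
    then show "norm (inverse (2 ^ n :: real) / (inverse (2 ^ n) + 1)\<^sup>2) \<le> (1 / 2) ^ n"
      by (simp add: power_one_over inverse_eq_divide)
  qed simp
  ultimately show ?thesis
    by (subst summable_on_reindex) (auto simp: o_def summable_on_UNIV_nonneg_real_iff)
qed

text \<open>Adding the points \<open>2\<^sup>-\<^sup>n\<close> makes the set infinite, so that it can be enumerated without
  repetition; the extra points do no harm.\<close>
lemma blaschke_sequence_covering:
  assumes N: "N \<subseteq> {0<..}" "countable N" "(\<lambda>l. l / (l + 1)\<^sup>2) summable_on N"
  obtains g :: "nat \<Rightarrow> real" where "\<And>n. 0 < g n" "summable (\<lambda>n. g n / (g n + 1)\<^sup>2)" "N \<subseteq> range g"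
proof -
  define N' where "N' = N \<union> range (\<lambda>n. inverse (2 ^ n :: real))"
  have "inj (\<lambda>n::nat. inverse (2 ^ n :: real))"
    by (rule injI) simp
  then have "infinite N'"
    by (auto simp: N'_def dest: range_inj_infinite finite_subset)
  moreover have "countable N'"
    using N(2) by (simp add: N'_def)
  ultimately obtain g :: "nat \<Rightarrow> real" where g: "bij_betw g UNIV N'"
    using bij_betw_from_nat_into by blast
  have pos: "0 < g n" for n
  proof -
    have "g n \<in> N \<union> range (\<lambda>n. inverse (2 ^ n :: real))"
      using bij_betw_apply[OF g] by (simp add: N'_def)
    then show ?thesis
      using N(1) by auto
  qed
  have "(\<lambda>l. l / (l + 1)\<^sup>2) summable_on N'"
    unfolding N'_def using N(3) summable_on_range_inverse_power_2 by (rule summable_on_union)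
  then have "summable (\<lambda>n. g n / (g n + 1)\<^sup>2)"
    using summable_on_reindex_bij_betw[OF g, of "\<lambda>l. l / (l + 1)\<^sup>2"] pos
    by (simp add: summable_on_UNIV_nonneg_real_iff less_imp_le)
  moreover have "N \<subseteq> range g"
    using bij_betw_imp_surj_on[OF g] by (simp add: N'_def)
  ultimately show ?thesis
    using that pos by blast
qed

lemma exists_H2_vanishing_on_blaschke_set:
  assumes N: "N \<subseteq> {0<..}" "countable N" "(\<lambda>l. l / (l + 1)\<^sup>2) summable_on N"
  shows "\<exists>f\<in>H2. H2_nonzero f \<and> (\<forall>l\<in>N. f (Complex 0 l) = 0)"
proof -
  obtain g :: "nat \<Rightarrow> real" where g: "\<And>n. 0 < g n" "summable (\<lambda>n. g n / (g n + 1)\<^sup>2)" "N \<subseteq> range g"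
    using blaschke_sequence_covering[OF N] by blast
  note blaschke = holomorphic_blaschke_product[OF g(1,2)] norm_blaschke_product_le_1[OF g(1,2)]
    blaschke_product_vanishes[OF g(1,2)] blaschke_product_nonzero[OF g(1,2)]
  define f where "f z = blaschke_product g z / (z + \<i>)" for z
  have "Complex 1 1 + \<i> \<noteq> 0"
    by (simp add: complex_eq_iff)
  then have "H2_nonzero f"
    unfolding H2_nonzero_def f_def by (intro bexI[of _ "Complex 1 1"]) (simp_all add: blaschke)
  moreover have "f \<in> H2"
    unfolding f_def by (intro bounded_holomorphic_divide_in_H2 blaschke)
  moreover have "f (Complex 0 l) = 0" if "l \<in> N" for l
    using that g(3) by (auto simp: f_def blaschke)
  ultimately show ?thesis
    by blast
qed

section \<open>Zeros of \<open>H\<^sup>2\<close> functions on the imaginary axis\<close>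

lemma norm_contour_integral_linepath_le_nn_integral:
  assumes cont: "continuous_on (closed_segment a b) F"
  shows "ennreal (cmod (contour_integral (linepath a b) F))
         \<le> (\<integral>\<^sup>+s. ennreal (indicator {0..1} s * (cmod (F (linepath a b s)) * cmod (b - a))) \<partial>lborel)"
proof -
  define \<phi> where "\<phi> s = cmod (F (linepath a b s)) * cmod (b - a)" for s
  have integral: "((\<lambda>x. F (linepath a b x) * (b - a)) has_integral contour_integral (linepath a b) F) {0..1}"
    using contour_integrable_continuous_linepath[OF cont] has_contour_integral_integral
      has_contour_integral_linepath by blast
  have cont_\<phi>: "continuous_on {0..1} \<phi>"
    unfolding \<phi>_def using cont
    by (intro continuous_intros continuous_on_compose2[OF cont continuous_on_linepath])
      (auto simp: linepath_image_01)
  have "cmod (contour_integral (linepath a b) F) = cmod (integral {0..1} (\<lambda>x. F (linepath a b x) * (b - a)))"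
    using integral_unique[OF integral] by simp
  also have "\<dots> \<le> integral {0..1} \<phi>"
    by (rule integral_norm_bound_integral[OF has_integral_integrable[OF integral]
          integrable_continuous_interval[OF cont_\<phi>]]) (simp add: \<phi>_def norm_mult)
  finally have "cmod (contour_integral (linepath a b) F) \<le> integral {0..1} \<phi>" .
  moreover have "(\<integral>\<^sup>+s. ennreal (indicator {0..1} s * \<phi> s) \<partial>lborel) = ennreal (integral {0..1} \<phi>)"
    using integrable_integral[OF integrable_continuous_interval[OF cont_\<phi>]]
    by (rule nn_integral_has_integral_lebesgue[rotated]) (simp add: \<phi>_def)
  ultimately show ?thesis
    unfolding \<phi>_def by (simp add: ennreal_leI)
qed

lemma nn_integral_affine_unit_interval:
  fixes G :: "real \<Rightarrow> real"
  assumes uv: "u < v" and cont: "continuous_on {u..v} G"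
  shows "(\<integral>\<^sup>+s. ennreal (indicator {0..1} s * (G (u + s * (v - u)) * (v - u))) \<partial>lborel)
       = (\<integral>\<^sup>+x. ennreal (indicator {u..v} x * G x) \<partial>lborel)"
proof -
  define H where "H x = ennreal (indicator {u..v} x * G x)" for x
  have "(\<lambda>x. indicator {u..v} x *\<^sub>R G x) \<in> borel_measurable borel"
    by (rule borel_measurable_continuous_on_indicator[OF _ cont]) simp
  then have "H \<in> borel_measurable borel"
    unfolding H_def by simp
  then have "(\<integral>\<^sup>+x. H x \<partial>lborel) = (\<integral>\<^sup>+s. ennreal (v - u) * H (u + (v - u) * s) \<partial>lborel)"
    using uv by (subst nn_integral_real_affine[where c = "v - u" and t = u])
      (auto simp: nn_integral_cmult[symmetric] measurable_compose[OF _ \<open>H \<in> _\<close>])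
  also have "\<dots> = (\<integral>\<^sup>+s. ennreal (indicator {0..1} s * (G (u + s * (v - u)) * (v - u))) \<partial>lborel)"
  proof (rule nn_integral_cong)
    fix s :: real
    have "u \<le> u + (v - u) * s \<longleftrightarrow> 0 \<le> s"
      using uv by (simp add: zero_le_mult_iff)
    moreover have "u + (v - u) * s \<le> v \<longleftrightarrow> (v - u) * s \<le> (v - u) * 1"
      by (simp add: algebra_simps)
    ultimately have "u + (v - u) * s \<in> {u..v} \<longleftrightarrow> s \<in> {0..1}"
      using mult_le_cancel_left_pos[of "v - u" s 1] uv by auto
    then show "ennreal (v - u) * H (u + (v - u) * s) = ennreal (indicator {0..1} s * (G (u + s * (v - u)) * (v - u)))"
      using uv by (simp add: H_def indicator_def ennreal_mult'[symmetric] mult_ac)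
  qed
  finally show ?thesis
    by (simp add: H_def)
qed

lemma norm_contour_integral_linepath_le_line_integral:
  assumes uv: "u < v" and d: "cmod d = 1"
    and cont: "continuous_on (closed_segment (a + of_real u * d) (a + of_real v * d)) F"
  shows "ennreal (cmod (contour_integral (linepath (a + of_real u * d) (a + of_real v * d)) F))
         \<le> (\<integral>\<^sup>+x. ennreal (indicator {u..v} x * cmod (F (a + of_real x * d))) \<partial>lborel)"
proof -
  have path: "linepath (a + of_real u * d) (a + of_real v * d) s = a + of_real (u + s * (v - u)) * d" for s
    by (simp add: linepath_def scaleR_conv_of_real algebra_simps)
  have "(a + of_real v * d) - (a + of_real u * d) = of_real (v - u) * d"
    by (simp add: algebra_simps)
  then have length: "cmod ((a + of_real v * d) - (a + of_real u * d)) = v - u"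
    using uv d by (simp add: norm_mult flip: of_real_diff)
  have "a + of_real x * d \<in> closed_segment (a + of_real u * d) (a + of_real v * d)" if "x \<in> {u..v}" for x
  proof -
    have "a + of_real x * d = linepath (a + of_real u * d) (a + of_real v * d) ((x - u) / (v - u))"
      using uv unfolding path by simp
    moreover have "(x - u) / (v - u) \<in> {0..1}"
      using that uv by (auto simp: divide_simps)
    ultimately show ?thesis
      by (simp add: linepath_in_path)
  qed
  then have "continuous_on {u..v} (\<lambda>x. cmod (F (a + of_real x * d)))"
    by (intro continuous_intros continuous_on_compose2[OF cont]) auto
  then have "(\<integral>\<^sup>+s. ennreal (indicator {0..1} s * (cmod (F (linepath (a + of_real u * d) (a + of_real v * d) s))
                 * cmod ((a + of_real v * d) - (a + of_real u * d)))) \<partial>lborel)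
           = (\<integral>\<^sup>+x. ennreal (indicator {u..v} x * cmod (F (a + of_real x * d))) \<partial>lborel)"
    unfolding path length by (rule nn_integral_affine_unit_interval[OF uv])
  with norm_contour_integral_linepath_le_nn_integral[OF cont] show ?thesis
    by (rule ord_le_eq_trans)
qed

lemma norm_contour_integral_horizontal_le:
  assumes "x1 < x2" "continuous_on (closed_segment (Complex x1 y) (Complex x2 y)) F"
  shows "ennreal (cmod (contour_integral (linepath (Complex x1 y) (Complex x2 y)) F))
         \<le> (\<integral>\<^sup>+x. ennreal (indicator {x1..x2} x * cmod (F (Complex x y))) \<partial>lborel)"
proof -
  have "Complex 0 y + of_real x * 1 = Complex x y" for x
    by (simp add: complex_eq_iff)
  then show ?thesis
    using norm_contour_integral_linepath_le_line_integral[of x1 x2 1 "Complex 0 y" F] assms by simp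
qed

lemma norm_contour_integral_vertical_le:
  assumes "y1 < y2" "continuous_on (closed_segment (Complex x y1) (Complex x y2)) F"
  shows "ennreal (cmod (contour_integral (linepath (Complex x y1) (Complex x y2)) F))
         \<le> (\<integral>\<^sup>+y. ennreal (indicator {y1..y2} y * cmod (F (Complex x y))) \<partial>lborel)"
proof -
  have "Complex x 0 + of_real y * \<i> = Complex x y" for y
    by (simp add: complex_eq_iff)
  then show ?thesis
    using norm_contour_integral_linepath_le_line_integral[of y1 y2 \<i> "Complex x 0" F] assms by simp
qed

lemma norm_contour_integral_reversepath_linepath:
  "cmod (contour_integral (linepath b a) F) = cmod (contour_integral (linepath a b) F)"
  using contour_integral_reversepath[of "linepath a b" F] by simp

lemma path_image_rectpath_segments:
  fixes a1 a3 :: complex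
  defines "a2 \<equiv> Complex (Re a3) (Im a1)" and "a4 \<equiv> Complex (Re a1) (Im a3)"
  shows "path_image (rectpath a1 a3) =
    closed_segment a1 a2 \<union> closed_segment a2 a3 \<union> closed_segment a4 a3 \<union> closed_segment a1 a4"
  by (simp add: rectpath_def Let_def path_image_join closed_segment_commute a2_def a4_def Un_assoc)

lemma norm_contour_integral_rectpath_le:
  fixes a1 a3 :: complex
  defines "a2 \<equiv> Complex (Re a3) (Im a1)" and "a4 \<equiv> Complex (Re a1) (Im a3)"
  assumes cont: "continuous_on (path_image (rectpath a1 a3)) F"
  shows "cmod (contour_integral (rectpath a1 a3) F)
    \<le> cmod (contour_integral (linepath a1 a2) F) + cmod (contour_integral (linepath a2 a3) F)
      + cmod (contour_integral (linepath a4 a3) F) + cmod (contour_integral (linepath a1 a4) F)"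
proof -
  have int: "F contour_integrable_on linepath a1 a2" "F contour_integrable_on linepath a2 a3"
      "F contour_integrable_on linepath a3 a4" "F contour_integrable_on linepath a4 a1"
    using cont unfolding path_image_rectpath_segments a2_def[symmetric] a4_def[symmetric]
    by (auto intro!: contour_integrable_continuous_linepath simp: closed_segment_commute
        elim: continuous_on_subset)
  then have "F contour_integrable_on (linepath a3 a4 +++ linepath a4 a1)"
    by (intro contour_integrable_joinI) simp_all
  then have "F contour_integrable_on (linepath a2 a3 +++ linepath a3 a4 +++ linepath a4 a1)"
    using int by (intro contour_integrable_joinI) simp_all
  then have "contour_integral (rectpath a1 a3) F =
        contour_integral (linepath a1 a2) F + (contour_integral (linepath a2 a3) F +
        (contour_integral (linepath a3 a4) F + contour_integral (linepath a4 a1) F))"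
    unfolding rectpath_def Let_def a2_def[symmetric] a4_def[symmetric] using int by simp
  then show ?thesis
    using norm_triangle_ineq[of "contour_integral (linepath a1 a2) F"]
      norm_triangle_ineq[of "contour_integral (linepath a2 a3) F"]
      norm_triangle_ineq[of "contour_integral (linepath a3 a4) F"]
      norm_contour_integral_reversepath_linepath[of a4 a3 F]
      norm_contour_integral_reversepath_linepath[of a1 a4 F]
    by (smt (verit))
qed

lemma Cauchy_rectangle_estimate:
  assumes hol: "h holomorphic_on upper_half"
    and y: "0 < y1" "y1 < Im z0" "Im z0 < y2" and x: "x1 < Re z0" "Re z0 < x2"
  defines "F \<equiv> (\<lambda>w. h w / (w - z0))"
  shows "ennreal (2 * pi * cmod (h z0)) \<le>
     (\<integral>\<^sup>+x. ennreal (indicator {x1..x2} x * cmod (F (Complex x y1))) \<partial>lborel)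
   + (\<integral>\<^sup>+y. ennreal (indicator {y1..y2} y * cmod (F (Complex x2 y))) \<partial>lborel)
   + (\<integral>\<^sup>+x. ennreal (indicator {x1..x2} x * cmod (F (Complex x y2))) \<partial>lborel)
   + (\<integral>\<^sup>+y. ennreal (indicator {y1..y2} y * cmod (F (Complex x1 y))) \<partial>lborel)"
proof -
  define a1 where "a1 = Complex x1 y1"
  define a3 where "a3 = Complex x2 y2"
  have z0: "z0 \<in> box a1 a3"
    using x y by (simp add: in_box_complex_iff a1_def a3_def)
  have "path_image (rectpath a1 a3) = cbox a1 a3 - box a1 a3"
    using x y by (intro path_image_rectpath_cbox_minus_box) (simp_all add: a1_def a3_def)
  moreover have "cbox a1 a3 \<subseteq> upper_half"
    using y by (auto simp: in_cbox_complex_iff upper_half_def a1_def a3_def)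
  ultimately have path_image: "path_image (rectpath a1 a3) \<subseteq> upper_half - {z0}"
    using z0 by auto
  have "(F has_contour_integral (2 * pi * \<i> * winding_number (rectpath a1 a3) z0 * h z0)) (rectpath a1 a3)"
    unfolding F_def
  proof (rule Cauchy_integral_formula_convex_simple[OF convex_upper_half hol])
    show "z0 \<in> interior upper_half"
      using open_upper_half y by (simp add: interior_open upper_half_def)
  qed (use path_image in auto)
  then have "contour_integral (rectpath a1 a3) F = 2 * pi * \<i> * h z0"
    using winding_number_rectpath[OF z0] contour_integral_unique by simp
  moreover have cont: "continuous_on (path_image (rectpath a1 a3)) F"
    unfolding F_def using path_image
    by (intro continuous_intros holomorphic_on_imp_continuous_on holomorphic_on_subset[OF hol]) auto
  ultimately have "ennreal (2 * pi * cmod (h z0)) \<le>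
        ennreal (cmod (contour_integral (linepath (Complex x1 y1) (Complex x2 y1)) F))
      + ennreal (cmod (contour_integral (linepath (Complex x2 y1) (Complex x2 y2)) F))
      + ennreal (cmod (contour_integral (linepath (Complex x1 y2) (Complex x2 y2)) F))
      + ennreal (cmod (contour_integral (linepath (Complex x1 y1) (Complex x1 y2)) F))"
    using norm_contour_integral_rectpath_le[OF cont]
    by (simp add: a1_def a3_def norm_mult ennreal_plus[symmetric] ennreal_leI del: ennreal_plus)
  also have "\<dots> \<le> (\<integral>\<^sup>+x. ennreal (indicator {x1..x2} x * cmod (F (Complex x y1))) \<partial>lborel)
   + (\<integral>\<^sup>+y. ennreal (indicator {y1..y2} y * cmod (F (Complex x2 y))) \<partial>lborel)
   + (\<integral>\<^sup>+x. ennreal (indicator {x1..x2} x * cmod (F (Complex x y2))) \<partial>lborel)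
   + (\<integral>\<^sup>+y. ennreal (indicator {y1..y2} y * cmod (F (Complex x1 y))) \<partial>lborel)"
    using cont x y unfolding path_image_rectpath_segments a1_def a3_def
    by (intro add_mono norm_contour_integral_horizontal_le norm_contour_integral_vertical_le)
      (auto elim: continuous_on_subset)
  finally show ?thesis .
qed

lemma nn_integral_horizontal_le_H2_sqnorm:
  assumes "0 < y"
  shows "(\<integral>\<^sup>+x. ennreal ((cmod (f (Complex x y)))\<^sup>2) \<partial>lborel) \<le> H2_sqnorm f"
  unfolding H2_sqnorm_def using assms by (intro SUP_upper) simp

lemma H2_sqnorm_eq_ennreal:
  "f \<in> H2 \<Longrightarrow> H2_sqnorm f = ennreal (enn2real (H2_sqnorm f))"
  by (simp add: H2_def less_top[symmetric])

lemma continuous_on_holomorphic_Complex: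
  assumes "f holomorphic_on upper_half" "continuous_on A p" "continuous_on A q" "\<And>s. s \<in> A \<Longrightarrow> 0 < q s"
  shows "continuous_on A (\<lambda>s. f (Complex (p s) (q s)))"
proof (rule continuous_on_compose2[OF holomorphic_on_imp_continuous_on[OF assms(1)]])
  show "continuous_on A (\<lambda>s. Complex (p s) (q s))"
    unfolding Complex_eq using assms(2,3) by (intro continuous_intros)
qed (use assms(4) in auto)

lemma mult_le_weighted_sum_squares:
  fixes u v e :: real
  assumes "0 < e"
  shows "u * v \<le> e / 2 * u\<^sup>2 + 1 / (2 * e) * v\<^sup>2"
proof -
  have "0 \<le> (e * u - v)\<^sup>2 / e"
    using assms by simp
  also have "\<dots> = e * u\<^sup>2 - 2 * (u * v) + v\<^sup>2 / e"
    using assms by (simp add: power2_eq_square field_simps)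
  finally show ?thesis
    using assms by (simp add: field_simps)
qed

lemma nn_integral_indicator_le_linear_combination:
  fixes \<phi> P Q :: "real \<Rightarrow> real"
  assumes le: "\<And>x. x \<in> A \<Longrightarrow> \<phi> x \<le> a * P x + b * Q x"
    and nonneg: "\<And>x. 0 \<le> P x" "\<And>x. 0 \<le> Q x" "0 \<le> a" "0 \<le> b" "0 \<le> p" "0 \<le> q"
    and meas: "P \<in> borel_measurable borel" "Q \<in> borel_measurable borel"
    and P: "(\<integral>\<^sup>+x. ennreal (P x) \<partial>lborel) \<le> ennreal p"
    and Q: "(\<integral>\<^sup>+x. ennreal (Q x) \<partial>lborel) \<le> ennreal q"
  shows "(\<integral>\<^sup>+x. ennreal (indicator A x * \<phi> x) \<partial>lborel) \<le> ennreal (a * p + b * q)"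
proof -
  have "(\<integral>\<^sup>+x. ennreal (indicator A x * \<phi> x) \<partial>lborel)
        \<le> (\<integral>\<^sup>+x. (ennreal a * ennreal (P x) + ennreal b * ennreal (Q x)) \<partial>lborel)"
  proof (rule nn_integral_mono)
    fix x
    have "indicator A x * \<phi> x \<le> a * P x + b * Q x"
      using le[of x] nonneg(1,2)[of x] nonneg(3,4) by (auto simp: indicator_def)
    then show "ennreal (indicator A x * \<phi> x) \<le> ennreal a * ennreal (P x) + ennreal b * ennreal (Q x)"
      using nonneg(1,2)[of x] nonneg(3,4) by (simp add: ennreal_leI ennreal_plus[symmetric] ennreal_mult[symmetric] del: ennreal_plus)
  qed
  also have "\<dots> = ennreal a * (\<integral>\<^sup>+x. ennreal (P x) \<partial>lborel) + ennreal b * (\<integral>\<^sup>+x. ennreal (Q x) \<partial>lborel)"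
    using meas by (simp add: nn_integral_add nn_integral_cmult)
  also have "\<dots> \<le> ennreal a * ennreal p + ennreal b * ennreal q"
    by (intro add_mono mult_left_mono P Q) auto
  also have "\<dots> = ennreal (a * p + b * q)"
    using nonneg by (simp add: ennreal_plus ennreal_mult)
  finally show ?thesis .
qed

lemma nn_integral_horizontal_cauchy_kernel_le:
  assumes f: "f \<in> H2" and y: "0 < y" "y \<noteq> t" and e: "0 < e" and C: "0 \<le> C"
    and bound: "\<And>x. cmod (h (Complex x y)) \<le> C * cmod (f (Complex x y))"
  shows "(\<integral>\<^sup>+x. ennreal (indicator A x * cmod (h (Complex x y) / (Complex x y - Complex 0 t))) \<partial>lborel)
         \<le> ennreal (C * e / 2 * enn2real (H2_sqnorm f) + C / (2 * e) * (pi / \<bar>y - t\<bar>))"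
proof (rule nn_integral_indicator_le_linear_combination)
  fix x
  let ?w = "Complex x y - Complex 0 t"
  have "(cmod ?w)\<^sup>2 = x\<^sup>2 + \<bar>y - t\<bar>\<^sup>2"
    by (simp add: cmod_power2)
  then have kernel: "(1 / cmod ?w)\<^sup>2 = 1 / (x\<^sup>2 + \<bar>y - t\<bar>\<^sup>2)"
    by (simp add: power_one_over)
  have "cmod (h (Complex x y) / ?w) = cmod (h (Complex x y)) * (1 / cmod ?w)"
    by (simp add: norm_divide)
  also have "\<dots> \<le> C * cmod (f (Complex x y)) * (1 / cmod ?w)"
    by (rule mult_right_mono[OF bound]) simp
  also have "\<dots> = C * (cmod (f (Complex x y)) * (1 / cmod ?w))"
    by (rule mult.assoc)
  also have "\<dots> \<le> C * (e / 2 * (cmod (f (Complex x y)))\<^sup>2 + 1 / (2 * e) * (1 / cmod ?w)\<^sup>2)"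
    by (rule mult_left_mono[OF mult_le_weighted_sum_squares[OF e] C])
  also have "\<dots> = C * e / 2 * (cmod (f (Complex x y)))\<^sup>2 + C / (2 * e) * (1 / (x\<^sup>2 + \<bar>y - t\<bar>\<^sup>2))"
    unfolding kernel by (simp add: distrib_left)
  finally show "cmod (h (Complex x y) / ?w)
      \<le> C * e / 2 * (cmod (f (Complex x y)))\<^sup>2 + C / (2 * e) * (1 / (x\<^sup>2 + \<bar>y - t\<bar>\<^sup>2))" .
next
  have cont: "continuous_on UNIV (\<lambda>x. f (Complex x y))"
    using f y by (intro continuous_on_holomorphic_Complex continuous_on_id continuous_on_const) (auto simp: H2_def)
  show "(\<lambda>x. (cmod (f (Complex x y)))\<^sup>2) \<in> borel_measurable borel"
    by (intro borel_measurable_continuous_onI continuous_on_power continuous_on_norm cont)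
  show "(\<integral>\<^sup>+x. ennreal ((cmod (f (Complex x y)))\<^sup>2) \<partial>lborel) \<le> ennreal (enn2real (H2_sqnorm f))"
    using nn_integral_horizontal_le_H2_sqnorm[OF y(1)] H2_sqnorm_eq_ennreal[OF f]
    by (rule ord_le_eq_trans)
  show "(\<integral>\<^sup>+x. ennreal (1 / (x\<^sup>2 + \<bar>y - t\<bar>\<^sup>2)) \<partial>lborel) \<le> ennreal (pi / \<bar>y - t\<bar>)"
    using nn_integral_inverse_square_plus_square[of "\<bar>y - t\<bar>"] y by simp
  show "(\<lambda>x. 1 / (x\<^sup>2 + \<bar>y - t\<bar>\<^sup>2)) \<in> borel_measurable borel"
    by measurable
qed (use C e in simp_all)

lemma nn_integral_vertical_cauchy_kernel_le:
  assumes hol: "f holomorphic_on upper_half" and y: "0 < y1" "y1 \<le> y2" and X: "X \<noteq> 0" and C: "0 \<le> C"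
    and bound: "\<And>y. y \<in> {y1..y2} \<Longrightarrow> cmod (h (Complex X y)) \<le> C * cmod (f (Complex X y))"
    and small: "(\<integral>\<^sup>+y. ennreal (indicator {y1..y2} y * (cmod (f (Complex X y)))\<^sup>2) \<partial>lborel) \<le> 1"
  shows "(\<integral>\<^sup>+y. ennreal (indicator {y1..y2} y * cmod (h (Complex X y) / (Complex X y - Complex 0 t))) \<partial>lborel)
         \<le> ennreal (C / (2 * \<bar>X\<bar>) * 1 + C / (2 * \<bar>X\<bar>) * (y2 - y1))"
proof (rule nn_integral_indicator_le_linear_combination)
  fix y assume y: "y \<in> {y1..y2}"
  have "\<bar>X\<bar> \<le> cmod (Complex X y - Complex 0 t)"
    using abs_Re_le_cmod[of "Complex X y - Complex 0 t"] by simp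
  then have "cmod (h (Complex X y) / (Complex X y - Complex 0 t)) \<le> C * cmod (f (Complex X y)) / \<bar>X\<bar>"
    using bound[OF y] X C by (simp add: norm_divide frac_le)
  also have "\<dots> = C / \<bar>X\<bar> * (cmod (f (Complex X y)) * 1)"
    by simp
  also have "\<dots> \<le> C / \<bar>X\<bar> * (1 / 2 * (cmod (f (Complex X y)))\<^sup>2 + 1 / (2 * 1) * 1\<^sup>2)"
    using C by (intro mult_left_mono mult_le_weighted_sum_squares) auto
  finally show "cmod (h (Complex X y) / (Complex X y - Complex 0 t))
      \<le> C / (2 * \<bar>X\<bar>) * (indicator {y1..y2} y * (cmod (f (Complex X y)))\<^sup>2)
        + C / (2 * \<bar>X\<bar>) * indicator {y1..y2} y"
    using y by (simp add: algebra_simps)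
next
  have "continuous_on {y1..y2} (\<lambda>y. f (Complex X y))"
    using hol y by (intro continuous_on_holomorphic_Complex continuous_on_id continuous_on_const) auto
  then have "(\<lambda>y. indicator {y1..y2} y *\<^sub>R (cmod (f (Complex X y)))\<^sup>2) \<in> borel_measurable borel"
    by (intro borel_measurable_continuous_on_indicator continuous_intros) simp
  then show "(\<lambda>y. indicator {y1..y2} y * (cmod (f (Complex X y)))\<^sup>2) \<in> borel_measurable borel"
    by simp
  show "(\<integral>\<^sup>+y. ennreal (indicator {y1..y2} y :: real) \<partial>lborel) \<le> ennreal (y2 - y1)"
    using y by (simp add: ennreal_indicator emeasure_lborel_Icc_eq)
qed (use C small y in \<open>auto simp: indicator_def\<close>)

lemma nn_integral_strip_finite:
  assumes f: "f \<in> H2" and y1: "0 < y1"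
  shows "(\<integral>\<^sup>+x. (\<integral>\<^sup>+y. ennreal (indicator {y1..y2} y * (cmod (f (Complex x y)))\<^sup>2) \<partial>lborel) \<partial>lborel) < \<infinity>"
proof -
  \<comment> \<open>\<open>max y1\<close> changes nothing on the strip but makes the integrand continuous on all of \<open>\<real>\<^sup>2\<close>.\<close>
  define Q where "Q x y = ennreal (indicator {y1..y2} y * (cmod (f (Complex x (max y1 y))))\<^sup>2)" for x y
  have Q: "Q x y = ennreal (indicator {y1..y2} y * (cmod (f (Complex x y)))\<^sup>2)" for x y
    by (auto simp: Q_def indicator_def max_def)
  have "continuous_on UNIV (\<lambda>p::real \<times> real. f (Complex (fst p) (max y1 (snd p))))"
    using f y1 by (intro continuous_on_holomorphic_Complex continuous_intros) (auto simp: H2_def)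
  then have "(\<lambda>p::real \<times> real. (cmod (f (Complex (fst p) (max y1 (snd p)))))\<^sup>2) \<in> borel_measurable borel"
    by (intro borel_measurable_continuous_onI continuous_on_power continuous_on_norm)
  moreover have "(\<lambda>p::real \<times> real. indicator {y1..y2} (snd p) :: real) \<in> borel_measurable borel"
    using measurable_compose[OF measurable_snd borel_measurable_indicator[of "{y1..y2}"]]
    by (simp add: o_def borel_prod[symmetric])
  ultimately have "(\<lambda>p::real \<times> real. Q (fst p) (snd p)) \<in> borel_measurable borel"
    unfolding Q_def by measurable
  then have "(\<lambda>(x, y). Q x y) \<in> borel_measurable (lborel \<Otimes>\<^sub>M lborel)"
    unfolding lborel_prod by (simp add: case_prod_beta')
  then have "(\<integral>\<^sup>+x. (\<integral>\<^sup>+y. Q x y \<partial>lborel) \<partial>lborel) = (\<integral>\<^sup>+y. (\<integral>\<^sup>+x. Q x y \<partial>lborel) \<partial>lborel)"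
    by (rule lborel_pair.Fubini'[symmetric])
  also have "\<dots> \<le> (\<integral>\<^sup>+y. H2_sqnorm f * indicator {y1..y2} y \<partial>lborel)"
  proof (rule nn_integral_mono)
    fix y
    show "(\<integral>\<^sup>+x. Q x y \<partial>lborel) \<le> H2_sqnorm f * indicator {y1..y2} y"
      using nn_integral_horizontal_le_H2_sqnorm[of y f] y1 by (auto simp: Q indicator_def)
  qed
  also have "\<dots> = H2_sqnorm f * emeasure lborel {y1..y2}"
    by (simp add: nn_integral_cmult_indicator)
  also have "\<dots> < \<infinity>"
    using f by (simp add: H2_def emeasure_lborel_Icc_eq ennreal_mult_less_top)
  finally show ?thesis
    by (simp add: Q)
qed

lemma exists_le_1_if_nn_integral_less:
  fixes G :: "real \<Rightarrow> ennreal"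
  assumes less: "(\<integral>\<^sup>+x. G x \<partial>lborel) < ennreal (b - a)"
  shows "\<exists>x\<in>{a..b}. G x \<le> 1"
proof (rule ccontr)
  assume "\<not> ?thesis"
  then have "indicator {a..b} x \<le> G x" for x
    by (auto simp: indicator_def not_le less_imp_le)
  then have "(\<integral>\<^sup>+x. indicator {a..b} x \<partial>lborel) \<le> (\<integral>\<^sup>+x. G x \<partial>lborel)"
    by (intro nn_integral_mono)
  then have "emeasure lborel {a..b} \<le> (\<integral>\<^sup>+x. G x \<partial>lborel)"
    by simp
  with less show False
    by (cases "a \<le> b") (auto simp: emeasure_lborel_Icc_eq ennreal_neg)
qed

lemma H2_vertical_lines_small:
  assumes f: "f \<in> H2" and y1: "0 < y1"
  obtains X1 X2 where "X0 \<le> X1" "X2 \<le> - X0"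
    "(\<integral>\<^sup>+y. ennreal (indicator {y1..y2} y * (cmod (f (Complex X1 y)))\<^sup>2) \<partial>lborel) \<le> 1"
    "(\<integral>\<^sup>+y. ennreal (indicator {y1..y2} y * (cmod (f (Complex X2 y)))\<^sup>2) \<partial>lborel) \<le> 1"
proof -
  define G where "G x = (\<integral>\<^sup>+y. ennreal (indicator {y1..y2} y * (cmod (f (Complex x y)))\<^sup>2) \<partial>lborel)" for x
  obtain r where "(\<integral>\<^sup>+x. G x \<partial>lborel) = ennreal r" "0 \<le> r"
    using nn_integral_strip_finite[OF f y1, of y2] unfolding G_def
    by (cases "\<integral>\<^sup>+x. G x \<partial>lborel") (auto simp: G_def)
  then have less: "(\<integral>\<^sup>+x. G x \<partial>lborel) < ennreal (r + 1)"
    by (simp add: ennreal_lessI)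
  obtain X1 where "X0 \<le> X1" "G X1 \<le> 1"
    using exists_le_1_if_nn_integral_less[where G = G and a = X0 and b = "X0 + (r + 1)"] less by auto
  moreover obtain X2 where "X2 \<le> - X0" "G X2 \<le> 1"
    using exists_le_1_if_nn_integral_less[where G = G and a = "- X0 - (r + 1)" and b = "- X0"] less by auto
  ultimately show ?thesis
    using that by (simp add: G_def)
qed

lemma Cauchy_rectangle_H2_estimate:
  assumes f: "f \<in> H2" and hol: "h holomorphic_on upper_half"
    and Y: "0 < \<delta>" "\<delta> < t" "t < Y" and X: "X2 < 0" "0 < X1" and C: "0 \<le> C" and e: "0 < e"
    and bottom: "\<And>x. cmod (h (Complex x \<delta>)) \<le> cmod (f (Complex x \<delta>))"
    and top: "\<And>x. cmod (h (Complex x Y)) \<le> C * cmod (f (Complex x Y))"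
    and sides: "\<And>X y. X \<in> {X1, X2} \<Longrightarrow> y \<in> {\<delta>..Y} \<Longrightarrow> cmod (h (Complex X y)) \<le> C * cmod (f (Complex X y))"
    and small: "\<And>X. X \<in> {X1, X2} \<Longrightarrow>
      (\<integral>\<^sup>+y. ennreal (indicator {\<delta>..Y} y * (cmod (f (Complex X y)))\<^sup>2) \<partial>lborel) \<le> 1"
  defines "S \<equiv> enn2real (H2_sqnorm f)"
  shows "2 * pi * cmod (h (Complex 0 t)) \<le> (S + pi / (t - \<delta>)) / 2
    + (C * e / 2 * S + C / (2 * e) * (pi / \<bar>Y - t\<bar>))
    + (C / (2 * \<bar>X1\<bar>) * 1 + C / (2 * \<bar>X1\<bar>) * (Y - \<delta>))
    + (C / (2 * \<bar>X2\<bar>) * 1 + C / (2 * \<bar>X2\<bar>) * (Y - \<delta>))" (is "_ \<le> ?b1 + ?b3 + ?b2 + ?b4")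
proof -
  let ?F = "\<lambda>w. h w / (w - Complex 0 t)"
  have hol_f: "f holomorphic_on upper_half"
    using f by (simp add: H2_def)
  have "\<bar>\<delta> - t\<bar> = t - \<delta>"
    using Y by simp
  then have b1: "?b1 = 1 * 1 / 2 * S + 1 / (2 * 1) * (pi / \<bar>\<delta> - t\<bar>)"
    by (simp add: add_divide_distrib)
  have nonneg: "0 \<le> ?b1" "0 \<le> ?b2" "0 \<le> ?b3" "0 \<le> ?b4"
    using Y C e by (auto simp: S_def intro!: add_nonneg_nonneg mult_nonneg_nonneg)
  have "ennreal (2 * pi * cmod (h (Complex 0 t))) \<le>
       (\<integral>\<^sup>+x. ennreal (indicator {X2..X1} x * cmod (?F (Complex x \<delta>))) \<partial>lborel)
     + (\<integral>\<^sup>+y. ennreal (indicator {\<delta>..Y} y * cmod (?F (Complex X1 y))) \<partial>lborel)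
     + (\<integral>\<^sup>+x. ennreal (indicator {X2..X1} x * cmod (?F (Complex x Y))) \<partial>lborel)
     + (\<integral>\<^sup>+y. ennreal (indicator {\<delta>..Y} y * cmod (?F (Complex X2 y))) \<partial>lborel)"
    using Cauchy_rectangle_estimate[OF hol, of \<delta> "Complex 0 t" Y X2 X1] Y X by simp
  also have "\<dots> \<le> ennreal ?b1 + ennreal ?b2 + ennreal ?b3 + ennreal ?b4"
  proof (intro add_mono)
    show "(\<integral>\<^sup>+x. ennreal (indicator {X2..X1} x * cmod (?F (Complex x \<delta>))) \<partial>lborel) \<le> ennreal ?b1"
      unfolding b1 unfolding S_def using f Y bottom by (intro nn_integral_horizontal_cauchy_kernel_le) auto
    show "(\<integral>\<^sup>+x. ennreal (indicator {X2..X1} x * cmod (?F (Complex x Y))) \<partial>lborel) \<le> ennreal ?b3"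
      unfolding S_def using f e C Y top by (intro nn_integral_horizontal_cauchy_kernel_le) auto
    show "(\<integral>\<^sup>+y. ennreal (indicator {\<delta>..Y} y * cmod (?F (Complex X1 y))) \<partial>lborel) \<le> ennreal ?b2"
      using hol_f Y X C sides small by (intro nn_integral_vertical_cauchy_kernel_le) auto
    show "(\<integral>\<^sup>+y. ennreal (indicator {\<delta>..Y} y * cmod (?F (Complex X2 y))) \<partial>lborel) \<le> ennreal ?b4"
      using hol_f Y X C sides small by (intro nn_integral_vertical_cauchy_kernel_le) auto
  qed
  also have "\<dots> = ennreal (?b1 + ?b2 + ?b3 + ?b4)"
    using nonneg by (simp only: ennreal_plus add_nonneg_nonneg)
  finally have "2 * pi * cmod (h (Complex 0 t)) \<le> ?b1 + ?b2 + ?b3 + ?b4"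
    using nonneg ennreal_le_iff add_nonneg_nonneg by metis
  then show ?thesis
    by linarith
qed

text \<open>Letting the rectangle of \<open>Cauchy_rectangle_H2_estimate\<close> grow, its top and sides
  contribute arbitrarily little: there \<open>h\<close> is dominated by \<open>f \<in> H\<^sup>2\<close>, and the sides are placed,
  by Fubini, where the vertical \<open>L\<^sup>2\<close> integral of \<open>f\<close> is small.\<close>
lemma Cauchy_estimate_from_line:
  assumes f: "f \<in> H2" and hol: "h holomorphic_on upper_half"
    and \<delta>: "0 < \<delta>" "\<delta> < t" and C: "0 \<le> C"
    and bottom: "\<And>x. cmod (h (Complex x \<delta>)) \<le> cmod (f (Complex x \<delta>))"
    and far: "\<And>w. R \<le> \<bar>Re w\<bar> \<or> R \<le> Im w \<Longrightarrow> cmod (h w) \<le> C * cmod (f w)"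
  shows "2 * pi * cmod (h (Complex 0 t)) \<le> (enn2real (H2_sqnorm f) + pi / (t - \<delta>)) / 2"
proof (rule field_le_epsilon)
  fix \<eta> :: real
  assume \<eta>: "0 < \<eta>"
  define S where "S = enn2real (H2_sqnorm f)"
  have S: "0 \<le> S"
    by (simp add: S_def)
  define e where "e = \<eta> / (4 * (C + 1) * (S + 1))"
  have e: "0 < e"
    using \<eta> C S by (simp add: e_def)
  have top1: "C * e / 2 * S \<le> \<eta> / 8"
  proof -
    have "C * e / 2 * S = \<eta> / 8 * (C / (C + 1)) * (S / (S + 1))"
      using C S by (simp add: e_def field_simps)
    also have "\<dots> \<le> \<eta> / 8 * 1 * 1"
      using \<eta> C S by (intro mult_mono) auto
    finally show ?thesis
      by simp
  qed
  define Y where "Y = t + \<bar>R\<bar> + 1 + 4 * C * pi / (e * \<eta>)"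
  have "0 \<le> 4 * C * pi / (e * \<eta>)"
    using C e \<eta> by simp
  then have Y: "4 * C * pi / (e * \<eta>) \<le> Y - t" "R \<le> Y" "t < Y"
    using \<delta> by (auto simp: Y_def)
  have top2: "C / (2 * e) * (pi / \<bar>Y - t\<bar>) \<le> \<eta> / 8"
    using Y e \<eta> by (simp add: field_simps)
  define X0 where "X0 = \<bar>R\<bar> + 1 + 2 * C * (1 + Y) / \<eta>"
  have "0 \<le> 2 * C * (1 + Y) / \<eta>"
    using C \<eta> Y \<delta> by simp
  have side: "C / (2 * \<bar>X\<bar>) * 1 + C / (2 * \<bar>X\<bar>) * (Y - \<delta>) \<le> \<eta> / 4" if "X0 \<le> \<bar>X\<bar>" for X
  proof -
    have "2 * C * (1 + Y) / \<eta> \<le> \<bar>X\<bar>" "0 < \<bar>X\<bar>"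
      using that \<open>0 \<le> 2 * C * (1 + Y) / \<eta>\<close> abs_ge_zero[of R] unfolding X0_def by linarith+
    then have "C * (1 + Y) \<le> \<eta> / 2 * \<bar>X\<bar>" "0 < \<bar>X\<bar>"
      using \<eta> by (simp_all add: field_simps)
    moreover have "C * (1 + (Y - \<delta>)) \<le> C * (1 + Y)"
      using C \<delta> by (intro mult_left_mono) auto
    ultimately show ?thesis
      by (simp add: field_simps)
  qed
  obtain X1 X2 where X: "X0 \<le> X1" "X2 \<le> - X0"
    "(\<integral>\<^sup>+y. ennreal (indicator {\<delta>..Y} y * (cmod (f (Complex X1 y)))\<^sup>2) \<partial>lborel) \<le> 1"
    "(\<integral>\<^sup>+y. ennreal (indicator {\<delta>..Y} y * (cmod (f (Complex X2 y)))\<^sup>2) \<partial>lborel) \<le> 1"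
    using H2_vertical_lines_small[OF f \<delta>(1)] by blast
  have "R \<le> X0" "0 < X0"
    using \<open>0 \<le> 2 * C * (1 + Y) / \<eta>\<close> by (auto simp: X0_def)
  have "2 * pi * cmod (h (Complex 0 t)) \<le> (S + pi / (t - \<delta>)) / 2
    + (C * e / 2 * S + C / (2 * e) * (pi / \<bar>Y - t\<bar>))
    + (C / (2 * \<bar>X1\<bar>) * 1 + C / (2 * \<bar>X1\<bar>) * (Y - \<delta>))
    + (C / (2 * \<bar>X2\<bar>) * 1 + C / (2 * \<bar>X2\<bar>) * (Y - \<delta>))"
    unfolding S_def using \<delta> Y X \<open>R \<le> X0\<close> \<open>0 < X0\<close> C e bottom
    by (intro Cauchy_rectangle_H2_estimate[OF f hol] far) auto
  moreover have "C / (2 * \<bar>X1\<bar>) * 1 + C / (2 * \<bar>X1\<bar>) * (Y - \<delta>) \<le> \<eta> / 4"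
    "C / (2 * \<bar>X2\<bar>) * 1 + C / (2 * \<bar>X2\<bar>) * (Y - \<delta>) \<le> \<eta> / 4"
    by (intro side; use X in linarith)+
  ultimately show "2 * pi * cmod (h (Complex 0 t)) \<le> (S + pi / (t - \<delta>)) / 2 + \<eta>"
    using top1 top2 \<eta> by linarith
qed

lemma holomorphic_factor_finite_zeros:
  assumes hol: "f holomorphic_on S" and S: "open S" and A: "finite A" "A \<subseteq> S"
    and zero: "\<And>a. a \<in> A \<Longrightarrow> f a = 0"
  obtains g where "g holomorphic_on S" "\<And>z. f z = (\<Prod>a\<in>A. z - a) * g z"
proof -
  have "\<exists>g. g holomorphic_on S \<and> (\<forall>z. f z = (\<Prod>a\<in>A. z - a) * g z)"
    using A zero
  proof (induction A)
    case empty
    then show ?case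
      using hol by auto
  next
    case (insert b A)
    then obtain g where g: "g holomorphic_on S" "\<And>z. f z = (\<Prod>a\<in>A. z - a) * g z"
      by auto
    have "(\<Prod>a\<in>A. b - a) \<noteq> 0"
      using insert.hyps by auto
    then have "g b = 0"
      using g(2)[of b] insert.prems by auto
    define g' where "g' z = (if z = b then deriv g b else (g z - g b) / (z - b))" for z
    have "g' holomorphic_on S"
      unfolding g'_def using g(1) S by (rule pole_lemma_open)
    moreover have "f z = (\<Prod>a\<in>insert b A. z - a) * g' z" for z
      using g(2)[of z] \<open>g b = 0\<close> insert.hyps by (auto simp: g'_def mult_ac)
    ultimately show ?case
      by blast
  qed
  with that show ?thesis
    by blast
qed

lemma holomorphic_factor_imaginary_zeros:
  assumes hol: "f holomorphic_on upper_half" and L: "finite L"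
    and zeros: "\<And>l. l \<in> L \<Longrightarrow> 0 < l \<and> f (Complex 0 l) = 0"
  obtains g where "g holomorphic_on upper_half" "\<And>z. f z = (\<Prod>l\<in>L. z - Complex 0 l) * g z"
proof -
  have "Complex 0 ` L \<subseteq> upper_half"
    using zeros by auto
  then obtain g where "g holomorphic_on upper_half" "\<And>z. f z = (\<Prod>a\<in>Complex 0 ` L. z - a) * g z"
    using holomorphic_factor_finite_zeros[OF hol open_upper_half finite_imageI[OF L]] zeros by blast
  moreover have "inj_on (Complex 0) L"
    by (auto intro: inj_onI)
  ultimately show ?thesis
    using that by (simp add: prod.reindex)
qed

lemma prod_norm_reflected_le:
  assumes far: "\<And>l. l \<in> L \<Longrightarrow> \<delta> < l \<and> 2 * l \<le> cmod (w - Complex 0 l)" and \<delta>: "0 < \<delta>"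
  shows "(\<Prod>l\<in>L. cmod (w - Complex 0 (2 * \<delta> - l))) \<le> 2 ^ card L * (\<Prod>l\<in>L. cmod (w - Complex 0 l))"
proof -
  have "cmod (w - Complex 0 (2 * \<delta> - l)) \<le> 2 * cmod (w - Complex 0 l)" if l: "l \<in> L" for l
  proof -
    have "w - Complex 0 (2 * \<delta> - l) = (w - Complex 0 l) + Complex 0 (2 * l - 2 * \<delta>)"
      by (simp add: complex_eq_iff)
    moreover have "cmod (Complex 0 (2 * l - 2 * \<delta>)) = \<bar>2 * l - 2 * \<delta>\<bar>"
      by (simp add: cmod_def)
    ultimately have "cmod (w - Complex 0 (2 * \<delta> - l)) \<le> cmod (w - Complex 0 l) + \<bar>2 * l - 2 * \<delta>\<bar>"
      using norm_triangle_ineq by metis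
    then show ?thesis
      using far[OF l] \<delta> by linarith
  qed
  then show ?thesis
    using prod_mono[of L "\<lambda>l. cmod (w - Complex 0 (2 * \<delta> - l))" "\<lambda>l. 2 * cmod (w - Complex 0 l)"]
    by (simp add: prod.distrib)
qed

text \<open>\<open>h\<close> is \<open>f\<close> with each zero \<open>\<i> l\<close> moved to its mirror image \<open>\<i> (2 \<delta> - l)\<close> in the line
  \<open>Im z = \<delta>\<close>.\<close>
lemma reflect_imaginary_zeros:
  assumes hol: "f holomorphic_on upper_half" and L: "finite L"
    and zeros: "\<And>l. l \<in> L \<Longrightarrow> \<delta> < l \<and> f (Complex 0 l) = 0" and \<delta>: "0 < \<delta>"
  obtains h where "h holomorphic_on upper_half"
    and "\<And>x. cmod (h (Complex x \<delta>)) = cmod (f (Complex x \<delta>))"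
    and "\<And>w. (\<And>l. l \<in> L \<Longrightarrow> 2 * l \<le> cmod (w - Complex 0 l)) \<Longrightarrow> cmod (h w) \<le> 2 ^ card L * cmod (f w)"
    and "\<And>t. \<delta> < t \<Longrightarrow> cmod (h (Complex 0 t)) * (\<Prod>l\<in>L. \<bar>t - l\<bar>)
                      = cmod (f (Complex 0 t)) * (\<Prod>l\<in>L. t + l - 2 * \<delta>)"
proof -
  have "0 < l \<and> f (Complex 0 l) = 0" if "l \<in> L" for l
    using zeros[OF that] \<delta> by auto
  then obtain g where g: "g holomorphic_on upper_half" "\<And>z. f z = (\<Prod>l\<in>L. z - Complex 0 l) * g z"
    using holomorphic_factor_imaginary_zeros[OF hol L] by blast
  define h where "h z = g z * (\<Prod>l\<in>L. z - Complex 0 (2 * \<delta> - l))" for z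
  have relation: "cmod (h z) * (\<Prod>l\<in>L. cmod (z - Complex 0 l))
      = cmod (f z) * (\<Prod>l\<in>L. cmod (z - Complex 0 (2 * \<delta> - l)))" for z
    by (simp add: g(2) h_def norm_mult prod_norm mult_ac)
  have "h holomorphic_on upper_half"
    unfolding h_def by (intro holomorphic_intros g(1))
  moreover have "cmod (h (Complex x \<delta>)) = cmod (f (Complex x \<delta>))" for x
  proof -
    have "0 < cmod (Complex x \<delta> - Complex 0 l)" if "l \<in> L" for l
      using zeros[OF that] by (simp add: complex_eq_iff)
    then have "0 < (\<Prod>l\<in>L. cmod (Complex x \<delta> - Complex 0 l))"
      by (rule prod_pos)
    moreover have "cmod (Complex x \<delta> - Complex 0 (2 * \<delta> - l)) = cmod (Complex x \<delta> - Complex 0 l)" for l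
      by (simp add: cmod_def power2_commute)
    ultimately show ?thesis
      using relation[of "Complex x \<delta>"] by simp
  qed
  moreover have "cmod (h w) \<le> 2 ^ card L * cmod (f w)"
    if far: "\<And>l. l \<in> L \<Longrightarrow> 2 * l \<le> cmod (w - Complex 0 l)" for w
  proof -
    have "0 < cmod (w - Complex 0 l)" if "l \<in> L" for l
      using far[OF that] zeros[OF that] \<delta> by linarith
    then have "0 < (\<Prod>l\<in>L. cmod (w - Complex 0 l))"
      by (rule prod_pos)
    moreover have "cmod (h w) * (\<Prod>l\<in>L. cmod (w - Complex 0 l))
        \<le> (2 ^ card L * cmod (f w)) * (\<Prod>l\<in>L. cmod (w - Complex 0 l))"
      unfolding relation using prod_norm_reflected_le[of L \<delta> w] far zeros \<delta>
      by (simp add: mult_left_mono mult_ac)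
    ultimately show ?thesis
      by simp
  qed
  moreover have "cmod (h (Complex 0 t)) * (\<Prod>l\<in>L. \<bar>t - l\<bar>) = cmod (f (Complex 0 t)) * (\<Prod>l\<in>L. t + l - 2 * \<delta>)"
    if "\<delta> < t" for t
  proof -
    have "(\<Prod>l\<in>L. cmod (Complex 0 t - Complex 0 (2 * \<delta> - l))) = (\<Prod>l\<in>L. t + l - 2 * \<delta>)"
    proof (rule prod.cong)
      fix l assume "l \<in> L"
      then have "0 < t + l - 2 * \<delta>"
        using zeros \<open>\<delta> < t\<close> by force
      then show "cmod (Complex 0 t - Complex 0 (2 * \<delta> - l)) = t + l - 2 * \<delta>"
        by (simp add: cmod_def)
    qed simp
    moreover have "(\<Prod>l\<in>L. cmod (Complex 0 t - Complex 0 l)) = (\<Prod>l\<in>L. \<bar>t - l\<bar>)"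
      by (simp add: cmod_def)
    ultimately show ?thesis
      using relation[of "Complex 0 t"] by simp
  qed
  ultimately show ?thesis
    using that by blast
qed

lemma prod_le_2_prod_shifted:
  fixes t \<delta> :: real
  assumes L: "finite L" "\<And>l. l \<in> L \<Longrightarrow> 0 < l" and t: "0 < t"
    and \<delta>: "0 \<le> \<delta>" "\<delta> \<le> t / (4 * (card L + 1))"
  shows "(\<Prod>l\<in>L. t + l) \<le> 2 * (\<Prod>l\<in>L. t + l - 2 * \<delta>)"
proof -
  define q where "q = 1 - 2 * \<delta> / t"
  have a: "2 * \<delta> / t \<le> 1 / (2 * (card L + 1))"
    using \<delta> t by (simp add: field_simps)
  have "card L * (2 * \<delta> / t) \<le> card L * (1 / (2 * (card L + 1)))"
    by (rule mult_left_mono[OF a]) simp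
  also have "\<dots> \<le> 1 / 2"
    by (simp add: field_simps)
  finally have small: "card L * (2 * \<delta> / t) \<le> 1 / 2" .
  have "1 / (2 * (card L + 1)) \<le> (1 :: real)"
    by (simp add: field_simps)
  then have q: "0 \<le> q"
    using a unfolding q_def by linarith
  have "1 + card L * (- (2 * \<delta> / t)) \<le> (1 + (- (2 * \<delta> / t))) ^ card L"
    using q by (intro Bernoulli_inequality) (simp add: q_def)
  then have "1 / 2 \<le> q ^ card L"
    using small by (simp add: q_def)
  moreover have "q ^ card L * (\<Prod>l\<in>L. t + l) \<le> (\<Prod>l\<in>L. t + l - 2 * \<delta>)"
  proof -
    have "q ^ card L * (\<Prod>l\<in>L. t + l) = (\<Prod>l\<in>L. q * (t + l))"
      by (simp add: prod.distrib)
    also have "\<dots> \<le> (\<Prod>l\<in>L. t + l - 2 * \<delta>)"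
    proof (rule prod_mono)
      fix l assume "l \<in> L"
      then have "0 < l"
        using L by blast
      moreover have "q * (t + l) = t + l - 2 * \<delta> - 2 * \<delta> * l / t"
        using t by (simp add: q_def field_simps)
      moreover have "0 \<le> 2 * \<delta> * l / t" "0 \<le> q * (t + l)"
        using q t \<delta> \<open>0 < l\<close> by simp_all
      ultimately show "0 \<le> q * (t + l) \<and> q * (t + l) \<le> t + l - 2 * \<delta>"
        by linarith
    qed
    finally show ?thesis .
  qed
  moreover have "0 \<le> (\<Prod>l\<in>L. t + l)"
    using L t by (intro prod_nonneg) (simp add: add_nonneg_nonneg less_imp_le)
  ultimately have "1 / 2 * (\<Prod>l\<in>L. t + l) \<le> (\<Prod>l\<in>L. t + l - 2 * \<delta>)"
    by (meson mult_right_mono order_trans)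
  then show ?thesis
    by simp
qed

lemma two_mult_le_norm_minus_imaginary:
  assumes "0 \<le> l" "l \<le> M" "3 * M \<le> \<bar>Re w\<bar> \<or> 3 * M \<le> Im w"
  shows "2 * l \<le> cmod (w - Complex 0 l)"
  using assms abs_Re_le_cmod[of "w - Complex 0 l"] abs_Im_le_cmod[of "w - Complex 0 l"] by auto

lemma H2_zeros_shifted_product_bound:
  assumes f: "f \<in> H2" and L: "finite L"
    and zeros: "\<And>l. l \<in> L \<Longrightarrow> 0 < l \<and> f (Complex 0 l) = 0"
    and \<delta>: "0 < \<delta>" "\<And>l. l \<in> L \<Longrightarrow> \<delta> < l" "\<delta> \<le> t / 4"
  shows "cmod (f (Complex 0 t)) * (\<Prod>l\<in>L. t + l - 2 * \<delta>)
         \<le> (enn2real (H2_sqnorm f) + 2 * pi / t) / (4 * pi) * (\<Prod>l\<in>L. \<bar>t - l\<bar>)"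
proof -
  define S where "S = enn2real (H2_sqnorm f)"
  have "f holomorphic_on upper_half"
    using f by (simp add: H2_def)
  then obtain h where h: "h holomorphic_on upper_half"
    "\<And>x. cmod (h (Complex x \<delta>)) = cmod (f (Complex x \<delta>))"
    "\<And>w. (\<And>l. l \<in> L \<Longrightarrow> 2 * l \<le> cmod (w - Complex 0 l)) \<Longrightarrow> cmod (h w) \<le> 2 ^ card L * cmod (f w)"
    "\<And>s. \<delta> < s \<Longrightarrow> cmod (h (Complex 0 s)) * (\<Prod>l\<in>L. \<bar>s - l\<bar>)
                      = cmod (f (Complex 0 s)) * (\<Prod>l\<in>L. s + l - 2 * \<delta>)"
    using reflect_imaginary_zeros[OF _ L _ \<delta>(1)] zeros \<delta>(2) by blast
  have "l \<le> (\<Sum>l\<in>L. l)" if "l \<in> L" for l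
    using L zeros that by (intro member_le_sum) (auto intro: less_imp_le)
  then have "cmod (h w) \<le> 2 ^ card L * cmod (f w)"
    if "3 * (\<Sum>l\<in>L. l) \<le> \<bar>Re w\<bar> \<or> 3 * (\<Sum>l\<in>L. l) \<le> Im w" for w
    using that zeros by (intro h(3) two_mult_le_norm_minus_imaginary) (auto intro: less_imp_le)
  then have "2 * pi * cmod (h (Complex 0 t)) \<le> (S + pi / (t - \<delta>)) / 2"
    unfolding S_def using \<delta> h(2)
    by (intro Cauchy_estimate_from_line[OF f h(1), where C = "2 ^ card L" and R = "3 * (\<Sum>l\<in>L. l)"]) auto
  also have "\<dots> \<le> (S + 2 * pi / t) / 2"
    using \<delta> by (simp add: field_simps)
  finally have "cmod (h (Complex 0 t)) \<le> (S + 2 * pi / t) / (4 * pi)"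
    by (simp add: field_simps)
  then have "cmod (h (Complex 0 t)) * (\<Prod>l\<in>L. \<bar>t - l\<bar>) \<le> (S + 2 * pi / t) / (4 * pi) * (\<Prod>l\<in>L. \<bar>t - l\<bar>)"
    by (intro mult_right_mono) (simp_all add: prod_nonneg)
  then show ?thesis
    using h(4)[of t] \<delta> by (simp add: S_def)
qed

lemma H2_zeros_product_bound:
  assumes f: "f \<in> H2" and t: "0 < t" and L: "finite L"
    and zeros: "\<And>l. l \<in> L \<Longrightarrow> 0 < l \<and> f (Complex 0 l) = 0"
  shows "cmod (f (Complex 0 t)) * (\<Prod>l\<in>L. t + l)
         \<le> (enn2real (H2_sqnorm f) + 2 * pi / t) / (2 * pi) * (\<Prod>l\<in>L. \<bar>t - l\<bar>)"
proof -
  define \<delta> where "\<delta> = min (t / (4 * (card L + 1))) (Min (insert t L) / 2)"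
  have m: "0 < Min (insert t L)" "\<And>l. l \<in> L \<Longrightarrow> Min (insert t L) \<le> l"
    using L zeros t by auto
  then have \<delta>: "0 < \<delta>" "\<delta> \<le> t / (4 * (card L + 1))" "\<And>l. l \<in> L \<Longrightarrow> \<delta> < l"
    using t min.cobounded2[of "t / (4 * (card L + 1))" "Min (insert t L) / 2"]
    by (fastforce simp: \<delta>_def)+
  have "t / (4 * (card L + 1)) \<le> t / 4"
    using t by (intro divide_left_mono) auto
  then have "\<delta> \<le> t / 4"
    using \<delta>(2) by linarith
  have "cmod (f (Complex 0 t)) * (\<Prod>l\<in>L. t + l) \<le> cmod (f (Complex 0 t)) * (2 * (\<Prod>l\<in>L. t + l - 2 * \<delta>))"
    using prod_le_2_prod_shifted[OF L _ t _ \<delta>(2)] zeros \<delta>(1) by (simp add: mult_left_mono)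
  also have "\<dots> \<le> 2 * ((enn2real (H2_sqnorm f) + 2 * pi / t) / (4 * pi) * (\<Prod>l\<in>L. \<bar>t - l\<bar>))"
    using H2_zeros_shifted_product_bound[OF f L zeros \<delta>(1,3) \<open>\<delta> \<le> t / 4\<close>] by linarith
  finally show ?thesis
    by (simp add: mult.commute)
qed

lemma weight_le_one_minus_pseudo_hyperbolic_distance:
  fixes t l :: real
  assumes t: "0 < t" and l: "0 < l"
  shows "min t (1 / t) * (l / (l + 1)\<^sup>2) \<le> 1 - \<bar>t - l\<bar> / (t + l)"
proof (cases "l \<le> t")
  case True
  have "min t (1 / t) * (l / (l + 1)\<^sup>2) \<le> 1 / t * l"
    using frac_plus_one_squared_le(1)[OF l] t l by (intro mult_mono) auto
  also have "\<dots> \<le> 2 * l / (t + l)"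
    using True t l by (simp add: field_simps)
  also have "\<dots> = 1 - \<bar>t - l\<bar> / (t + l)"
    using True t l by (simp add: field_simps)
  finally show ?thesis .
next
  case False
  have "min t (1 / t) * (l / (l + 1)\<^sup>2) \<le> t * (1 / l)"
    using frac_plus_one_squared_le(2)[OF l] t l by (intro mult_mono) auto
  also have "\<dots> \<le> 2 * t / (t + l)"
    using False t l by (simp add: field_simps)
  also have "\<dots> = 1 - \<bar>t - l\<bar> / (t + l)"
    using False t l by (simp add: field_simps)
  finally show ?thesis .
qed

lemma summable_on_of_product_bound:
  fixes Z :: "real set"
  assumes t: "0 < t" and c: "0 < c" and Z: "Z \<subseteq> {0<..}"
    and bound: "\<And>L. finite L \<Longrightarrow> L \<subseteq> Z \<Longrightarrow> c * (\<Prod>l\<in>L. t + l) \<le> K * (\<Prod>l\<in>L. \<bar>t - l\<bar>)"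
  shows "(\<lambda>l. l / (l + 1)\<^sup>2) summable_on Z"
proof (rule nonneg_bdd_above_summable_on)
  define \<kappa> where "\<kappa> = min t (1 / t)"
  have \<kappa>: "0 < \<kappa>"
    using t by (simp add: \<kappa>_def)
  have K: "0 < K"
    using bound[of "{}"] c by simp
  have "(\<Sum>l\<in>L. l / (l + 1)\<^sup>2) \<le> ln (K / c) / \<kappa>" if L: "finite L" "L \<subseteq> Z" for L
  proof -
    have pos: "0 < l" if "l \<in> L" for l
      using that L Z by auto
    have "c / K \<le> (\<Prod>l\<in>L. \<bar>t - l\<bar>) / (\<Prod>l\<in>L. t + l)"
      using bound[OF L] K t pos by (simp add: field_simps prod_pos add_pos_pos)
    also have "\<dots> = (\<Prod>l\<in>L. \<bar>t - l\<bar> / (t + l))"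
      by (simp add: prod_dividef)
    also have "\<dots> \<le> (\<Prod>l\<in>L. exp (- (\<kappa> * (l / (l + 1)\<^sup>2))))"
    proof (rule prod_mono)
      fix l assume "l \<in> L"
      then have "\<bar>t - l\<bar> / (t + l) \<le> 1 + (- (\<kappa> * (l / (l + 1)\<^sup>2)))"
        using weight_le_one_minus_pseudo_hyperbolic_distance[OF t pos[OF \<open>l \<in> L\<close>]] unfolding \<kappa>_def by linarith
      also have "\<dots> \<le> exp (- (\<kappa> * (l / (l + 1)\<^sup>2)))"
        by (rule exp_ge_add_one_self)
      finally show "0 \<le> \<bar>t - l\<bar> / (t + l) \<and> \<bar>t - l\<bar> / (t + l) \<le> exp (- (\<kappa> * (l / (l + 1)\<^sup>2)))"
        using t pos[OF \<open>l \<in> L\<close>] by simp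
    qed
    also have "\<dots> = exp (\<Sum>l\<in>L. - (\<kappa> * (l / (l + 1)\<^sup>2)))"
      using L(1) by (simp add: exp_sum)
    also have "\<dots> = exp (- (\<kappa> * (\<Sum>l\<in>L. l / (l + 1)\<^sup>2)))"
      by (simp add: sum_negf sum_distrib_left)
    finally have "ln (c / K) \<le> ln (exp (- (\<kappa> * (\<Sum>l\<in>L. l / (l + 1)\<^sup>2))))"
      using c K by (subst ln_le_cancel_iff) auto
    moreover have "ln (c / K) = - ln (K / c)"
      using c K by (simp add: ln_div)
    ultimately have "\<kappa> * (\<Sum>l\<in>L. l / (l + 1)\<^sup>2) \<le> ln (K / c)"
      by simp
    then show ?thesis
      using \<kappa> by (simp add: field_simps)
  qed
  then show "bdd_above (sum (\<lambda>l. l / (l + 1)\<^sup>2) ` {L. L \<subseteq> Z \<and> finite L})"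
    by (intro bdd_aboveI[where M = "ln (K / c) / \<kappa>"]) auto
qed (use Z in auto)

lemma holomorphic_vanishing_on_imaginary_axis:
  assumes hol: "f holomorphic_on upper_half"
    and zero: "\<And>t. 0 < t \<Longrightarrow> f (Complex 0 t) = 0" and z: "z \<in> upper_half"
  shows "f z = 0"
proof (rule analytic_continuation[OF hol open_upper_half convex_connected[OF convex_upper_half],
      where U = "Complex 0 ` {0<..}" and \<xi> = "Complex 0 1"])
  show "Complex 0 ` {0<..} \<subseteq> upper_half" "Complex 0 1 \<in> upper_half"
    by auto
  have lim: "(\<lambda>n. Complex 0 (1 + inverse (Suc n))) \<longlonglongrightarrow> Complex 0 1"
    by (intro tendsto_Complex tendsto_const LIMSEQ_inverse_real_of_nat_add)
  have mem: "Complex 0 (1 + inverse (Suc n)) \<in> Complex 0 ` {0<..} - {Complex 0 1}" for n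
  proof -
    have "0 < 1 + inverse (real (Suc n))"
      by (simp add: add_pos_pos)
    then show ?thesis
      by simp
  qed
  show "Complex 0 1 islimpt Complex 0 ` {0<..}"
    unfolding islimpt_sequential by (intro exI[where x = "\<lambda>n. Complex 0 (1 + inverse (Suc n))"] conjI allI mem lim)
qed (use zero z in force)+

lemma H2_zeros_blaschke_condition:
  assumes f: "f \<in> H2" and nonzero: "H2_nonzero f"
  shows "(\<lambda>l. l / (l + 1)\<^sup>2) summable_on {l. 0 < l \<and> f (Complex 0 l) = 0}"
proof -
  have "\<exists>t>0. f (Complex 0 t) \<noteq> 0"
  proof (rule ccontr)
    assume vanishing: "\<not> ?thesis"
    have "f z = 0" if "z \<in> upper_half" for z
      by (rule holomorphic_vanishing_on_imaginary_axis[of f]) (use f vanishing that in \<open>auto simp: H2_def\<close>)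
    with nonzero show False
      by (auto simp: H2_nonzero_def)
  qed
  then obtain t where t: "0 < t" "f (Complex 0 t) \<noteq> 0"
    by blast
  show ?thesis
  proof (rule summable_on_of_product_bound[OF t(1)])
    show "0 < cmod (f (Complex 0 t))"
      using t by simp
    fix L assume "finite L" "L \<subseteq> {l. 0 < l \<and> f (Complex 0 l) = 0}"
    then show "cmod (f (Complex 0 t)) * (\<Prod>l\<in>L. t + l)
        \<le> (enn2real (H2_sqnorm f) + 2 * pi / t) / (2 * pi) * (\<Prod>l\<in>L. \<bar>t - l\<bar>)"
      by (intro H2_zeros_product_bound[OF f t(1)]) auto
  qed auto
qed

lemma countable_if_summable_on_blaschke_weight:
  assumes "N \<subseteq> {0<..}" "(\<lambda>l::real. l / (l + 1)\<^sup>2) summable_on N"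
  shows "countable N"
proof -
  have "countable {l \<in> N. l / (l + 1)\<^sup>2 \<noteq> 0}"
    by (rule summable_countable_real[OF assms(2)])
  also have "{l \<in> N. l / (l + 1)\<^sup>2 \<noteq> 0} = N"
    using assms(1) by auto
  finally show ?thesis .
qed

section \<open>Strict positivity of \<open>H\<^sub>\<mu>\<close>\<close>

lemma carleson_form_diagonal:
  assumes M: "C_Carleson M" and f: "f \<in> H2"
  shows "integrable M (\<lambda>l. (cmod (f (Complex 0 l)))\<^sup>2)"
    and "carleson_form M f f = complex_of_real (\<integral>l. (cmod (f (Complex 0 l)))\<^sup>2 \<partial>M)"
proof -
  have eq: "(\<lambda>l. cnj (f (Complex 0 l)) * f (Complex 0 l)) = (\<lambda>l. complex_of_real ((cmod (f (Complex 0 l)))\<^sup>2))"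
    by (rule ext) (metis complex_norm_square mult.commute)
  have "integrable M (\<lambda>l. cnj (f (Complex 0 l)) * f (Complex 0 l))"
    using M f by (simp add: C_Carleson_def)
  then show "integrable M (\<lambda>l. (cmod (f (Complex 0 l)))\<^sup>2)"
    unfolding eq complex_of_real_integrable_eq .
  show "carleson_form M f f = complex_of_real (\<integral>l. (cmod (f (Complex 0 l)))\<^sup>2 \<partial>M)"
    unfolding carleson_form_def eq integral_complex_of_real ..
qed

lemma not_H_strictly_positive_iff:
  assumes M: "C_Carleson M"
  shows "\<not> H_strictly_positive M \<longleftrightarrow> (\<exists>f\<in>H2. H2_nonzero f \<and> (AE l in M. f (Complex 0 l) = 0))"
proof -
  have "(\<nexists>r. 0 < r \<and> carleson_form M f f = complex_of_real r) \<longleftrightarrow> (AE l in M. f (Complex 0 l) = 0)"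
    if f: "f \<in> H2" for f
  proof -
    have "(\<nexists>r. 0 < r \<and> carleson_form M f f = complex_of_real r) \<longleftrightarrow>
        (\<integral>l. (cmod (f (Complex 0 l)))\<^sup>2 \<partial>M) = 0"
    proof -
      have "0 \<le> (\<integral>l. (cmod (f (Complex 0 l)))\<^sup>2 \<partial>M)"
        by simp
      then show ?thesis
        using carleson_form_diagonal(2)[OF M f] by (auto simp: less_le)
    qed
    also have "\<dots> \<longleftrightarrow> (AE l in M. f (Complex 0 l) = 0)"
      using integral_nonneg_eq_0_iff_AE[OF carleson_form_diagonal(1)[OF M f]] by simp
    finally show ?thesis .
  qed
  then show ?thesis
    unfolding H_strictly_positive_def by blast
qed

lemma space_C_Carleson: "C_Carleson M \<Longrightarrow> space M = {0<..}"
  using sets_eq_imp_space_eq[of M "restrict_space borel {0<..}"]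
  by (simp add: C_Carleson_def measure_on_Rplus_def)

lemma AE_mem_countable_iff:
  assumes M: "C_Carleson M" and N: "countable N"
  shows "(AE l in M. l \<in> N) \<longleftrightarrow> emeasure M ({0<..} - N) = 0"
proof -
  have "N \<in> sets borel"
    by (rule sets.countable[OF _ N]) auto
  then have "{0<..} - N \<in> sets M"
    using M by (simp add: C_Carleson_def measure_on_Rplus_def sets_restrict_space_iff)
  then show ?thesis
    using AE_iff_measurable[of "{0<..} - N" M "\<lambda>l. l \<in> N"] space_C_Carleson[OF M] by auto
qed

theorem corollaryA4:
  fixes M :: "real measure"
  assumes "C_Carleson M"
  shows "\<not> H_strictly_positive M \<longleftrightarrow>
    (\<exists>N. N \<subseteq> {0<..} \<and> countable N \<and> (\<lambda>l. l / (l + 1)\<^sup>2) summable_on N \<and>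
         emeasure M ({0<..} - N) = 0)"
  unfolding not_H_strictly_positive_iff[OF assms]
proof safe
  fix f assume f: "f \<in> H2" "H2_nonzero f" and AE: "AE l in M. f (Complex 0 l) = 0"
  let ?N = "{l. 0 < l \<and> f (Complex 0 l) = 0}"
  have summable: "(\<lambda>l. l / (l + 1)\<^sup>2) summable_on ?N"
    using f by (rule H2_zeros_blaschke_condition)
  moreover have "?N \<subseteq> {0<..}"
    by auto
  ultimately have "countable ?N"
    by (intro countable_if_summable_on_blaschke_weight)
  have "AE l in M. l \<in> ?N"
    using AE AE_space by eventually_elim (simp add: space_C_Carleson[OF assms])
  then have "emeasure M ({0<..} - ?N) = 0"
    using AE_mem_countable_iff[OF assms \<open>countable ?N\<close>] by blast
  with summable \<open>countable ?N\<close> \<open>?N \<subseteq> {0<..}\<close>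
  show "\<exists>N\<subseteq>{0<..}. countable N \<and> (\<lambda>l. l / (l + 1)\<^sup>2) summable_on N \<and> emeasure M ({0<..} - N) = 0"
    by blast
next
  fix N assume N: "N \<subseteq> {0<..}" "countable N" "(\<lambda>l. l / (l + 1)\<^sup>2) summable_on N"
    "emeasure M ({0<..} - N) = 0"
  obtain f where f: "f \<in> H2" "H2_nonzero f" "\<And>l. l \<in> N \<Longrightarrow> f (Complex 0 l) = 0"
    using exists_H2_vanishing_on_blaschke_set[OF N(1-3)] by blast
  have "AE l in M. l \<in> N"
    using AE_mem_countable_iff[OF assms N(2)] N(4) by blast
  then have "AE l in M. f (Complex 0 l) = 0"
    by eventually_elim (rule f(3))
  with f(1,2) show "\<exists>f\<in>H2. H2_nonzero f \<and> (AE l in M. f (Complex 0 l) = 0)"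
    by blast
qed

end
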